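(* Let $A\in\mathbb R^{N\times N}$ be a non-singular $M$-matrix, let $p\in(-1,1)$, and let $x_*\in\mathbb R^N$, $x_*>0$, be the unique positive solution of $Ax=x^p$. Set $C_{\min}=\min_i(A^{-1}\mathbf 1)_i$, $C_{\max}=\max_i(A^{-1}\mathbf 1)_i$, and $m=C_{\min}^{1/(1-p)}$, $M=C_{\max}^{1/(1-p)}$ if $p\in[0,1)$, while $m=(C_{\min}C_{\max}^{p})^{1/(1-p^2)}$, $M=(C_{\min}^{p}C_{\max})^{1/(1-p^2)}$ if $p\in(-1,0)$. Let $x_1\in\mathbb R^N$ with $m\mathbf 1\le x_1\le M\mathbf 1$ and define $x_{n+1}=A^{-1}x_n^{p}$ for $n\ge1$. Then $x_n\to x_*$ as $n\to\infty$, and the convergence is geometric with rate at most $|p|$: there is a constant $K$ (independent of $n$) with $\|x_n-x_*\|_\infty\le K|p|^n$ for all $n$.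
   Context: $\mathbf 1=(1,\dots,1)^\top$; inequalities are componentwise; for $x>0$, $x^p:=(x_i^p)_i$. A $Z$-matrix has non-positive off-diagonal entries; a $Z$-matrix $A$ is an $M$-matrix if $A=s\,\mathrm{Id}-B$ with $B\ge0$ and $s\ge\rho(B)$ (spectral radius), and a non-singular $M$-matrix if moreover invertible (equivalently, invertible with $A^{-1}\ge0$). Existence and uniqueness of $x_*$ holds for non-singular $M$-matrices and $p<1$. *)

theory Defs
  imports "HOL-Analysis.Analysis"
begin

definition spectral_radius :: "real^'n^'n \<Rightarrow> real" where
  "spectral_radius B = Max {cmod l | l. \<exists>v::complex^'n. v \<noteq> 0 \<and>
      (\<chi> i j. complex_of_real (B$i$j)) *v v = l *s v}"

definition Z_matrix :: "real^'n^'n \<Rightarrow> bool" where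
  "Z_matrix A \<longleftrightarrow> (\<forall>i j. i \<noteq> j \<longrightarrow> A$i$j \<le> 0)"

definition M_matrix :: "real^'n^'n \<Rightarrow> bool" where
  "M_matrix A \<longleftrightarrow> Z_matrix A \<and>
     (\<exists>s B. (\<forall>i j. 0 \<le> B$i$j) \<and> A = s *\<^sub>R mat 1 - B \<and> spectral_radius B \<le> s)"

definition nonsingular_M_matrix :: "real^'n^'n \<Rightarrow> bool" where
  "nonsingular_M_matrix A \<longleftrightarrow> M_matrix A \<and> invertible A"

definition vpow :: "real^'n \<Rightarrow> real \<Rightarrow> real^'n" where
  "vpow x p = (\<chi> i. (x$i) powr p)"

definition ones :: "real^'n" where "ones = (\<chi> i. 1)"

definition sup_norm :: "real^'n \<Rightarrow> real" where
  "sup_norm x = Max (range (\<lambda>i. \<bar>x$i\<bar>))"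

end

theory Submission
  imports Defs "HOL-Computational_Algebra.Polynomial"
begin

text \<open>
  A nonsingular M-matrix \<open>A = s I - B\<close> is inverse-nonnegative. For the Z-matrices \<open>t I - B\<close>,
  semipositivity (some \<open>u > 0\<close> with \<open>(t I - B) u > 0\<close>) implies inverse-nonnegativity, holds
  for large \<open>t\<close>, and survives lowering \<open>t\<close>: the set \<open>T\<close> of such \<open>t\<close> is open, and if
  \<open>t\<^sub>0 I - B\<close> is invertible at \<open>t\<^sub>0 = inf T\<close>, inverse-nonnegativity passes to the limit
  \<open>t \<down> t\<^sub>0\<close> and puts \<open>t\<^sub>0\<close> into \<open>T\<close>. As \<open>t I - B\<close> is singular only if
  \<open>\<bar>t\<bar> \<le> \<rho>(B) \<le> s\<close>, the continuation reaches \<open>t = s\<close>.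

  Hence \<open>G = A\<^sup>-\<^sup>1\<close> is linear and order preserving, so it does not increase Thompson's metric
  \<open>d(v, w) = max\<^sub>i \<bar>ln w\<^sub>i - ln v\<^sub>i\<bar>\<close> on positive vectors, while \<open>v \<mapsto> v\<^sup>p\<close>
  multiplies it by at most \<open>\<bar>p\<bar>\<close>. Since \<open>x\<^sub>* = G x\<^sub>*\<^sup>p\<close>, this gives
  \<open>d(x\<^sub>n, x\<^sub>*) \<le> \<bar>p\<bar>\<^sup>n\<^sup>-\<^sup>1 d(x\<^sub>1, x\<^sub>*)\<close>, and on a \<open>d\<close>-ball the sup-norm distance
  is bounded by a multiple of \<open>d\<close>. The bounds \<open>m \<le> x\<^sub>1 \<le> M\<close> are used only through
  \<open>m > 0\<close>.
\<close>

lemma invertible_iff_inj: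
  fixes A :: "'a::field^'n^'n"
  shows "invertible A \<longleftrightarrow> inj ((*v) A)"
  by (simp add: invertible_left_inverse matrix_left_invertible_injective)

lemma matrix_inv_cancel_left:
  fixes A :: "'a::field^'n^'n"
  assumes "invertible A" shows "matrix_inv A *v (A *v w) = w"
proof -
  have "matrix_inv A ** A = mat 1"
    using someI_ex[OF assms[unfolded invertible_def]] by (simp add: matrix_inv_def)
  then show ?thesis by (simp add: matrix_vector_mul_assoc)
qed

lemma matrix_inv_cancel_right:
  fixes A :: "'a::field^'n^'n"
  assumes "invertible A" shows "A *v (matrix_inv A *v w) = w"
proof -
  have "A ** matrix_inv A = mat 1"
    using someI_ex[OF assms[unfolded invertible_def]] by (simp add: matrix_inv_def)
  then show ?thesis by (simp add: matrix_vector_mul_assoc)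
qed

lemma mat_mult_vector: "mat c *v v = c *s (v :: 'a::comm_semiring_1^'n)"
  by (simp add: vec_eq_iff matrix_vector_mult_def mat_def if_distrib[where f = "\<lambda>a. a * _"]
      cong: if_cong)

lemma scaleR_mat_one: "t *\<^sub>R (mat 1 :: real^'n^'n) = mat t"
  by (simp add: vec_eq_iff mat_def)

lemma shift_mult_vector_component:
  fixes B :: "'a::comm_ring_1^'n^'n"
  shows "((mat t - B) *v u)$i = t * u$i - (B *v u)$i"
  unfolding matrix_vector_mult_diff_rdistrib mat_mult_vector by simp

lemma finite_range_has_max: "\<exists>i. \<forall>j. f j \<le> f i"
  for f :: "'n::finite \<Rightarrow> 'a::linorder"
  using Max_in[of "range f"] Max_ge[of "range f"] by fastforce

lemma finite_range_has_min: "\<exists>i. \<forall>j. f i \<le> f j"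
  for f :: "'n::finite \<Rightarrow> 'a::linorder"
  using Min_in[of "range f"] Min_le[of "range f"] by fastforce

lemma ex_pos_small_scale:
  fixes a c :: "real^'n"
  assumes "\<forall>i. 0 < c$i"
  shows "\<exists>\<delta>>0. \<forall>i. \<delta> * a$i < c$i"
proof -
  have "\<forall>\<^sub>F \<delta> in at_right 0. \<delta> * a$i < c$i" for i
  proof -
    have "((\<lambda>\<delta>. \<delta> * a$i) \<longlongrightarrow> 0) (at_right 0)"
      by (auto intro!: tendsto_eq_intros)
    then show ?thesis
      using assms order_tendstoD(2) by blast
  qed
  then have "\<forall>\<^sub>F \<delta> in at_right 0. \<forall>i. \<delta> * a$i < c$i"
    by (rule eventually_all_finite)
  then have "\<forall>\<^sub>F \<delta> in at_right 0. 0 < \<delta> \<and> (\<forall>i. \<delta> * a$i < c$i)"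
    by (intro eventually_conj eventually_at_right_less)
  then show ?thesis
    using eventually_happens'[OF trivial_limit_at_right_real] by blast
qed

subsection \<open>Eigenvalues and the spectral radius\<close>

definition eigenvalues :: "'a::field^'n^'n \<Rightarrow> 'a set" where
  "eigenvalues C = {l. \<exists>v. v \<noteq> 0 \<and> C *v v = l *s v}"

lemma eigenvalues_iff_singular: "l \<in> eigenvalues C \<longleftrightarrow> \<not> invertible (mat l - C)"
proof -
  have "l \<in> eigenvalues C \<longleftrightarrow> (\<exists>v. v \<noteq> 0 \<and> (mat l - C) *v v = 0)"
    by (auto simp: eigenvalues_def matrix_vector_mult_diff_rdistrib mat_mult_vector)
  also have "\<dots> \<longleftrightarrow> \<not> inj ((*v) (mat l - C))"
    by (auto simp: vec.inj_on_iff_eq_0[of UNIV, simplified])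
  finally show ?thesis by (simp add: invertible_iff_inj)
qed

lemma eigenvalue_norm_le:
  fixes C :: "'a::real_normed_field^'n^'n"
  assumes "l \<in> eigenvalues C"
  shows "norm l \<le> (\<Sum>i\<in>UNIV. \<Sum>j\<in>UNIV. norm (C$i$j))"
proof -
  obtain v where "v \<noteq> 0" and v: "C *v v = l *s v"
    using assms by (auto simp: eigenvalues_def)
  obtain i where i: "\<And>j. norm (v$j) \<le> norm (v$i)"
    using finite_range_has_max[of "\<lambda>j. norm (v$j)"] by blast
  obtain k where "v$k \<noteq> 0"
    using \<open>v \<noteq> 0\<close> by (auto simp: vec_eq_iff)
  then have "norm (v$i) > 0"
    using i[of k] by (meson less_le_trans zero_less_norm_iff)
  have "norm l * norm (v$i) = norm (\<Sum>j\<in>UNIV. C$i$j * v$j)"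
    using arg_cong[OF v, of "\<lambda>w. w$i"] by (simp add: matrix_vector_mult_def norm_mult)
  also have "\<dots> \<le> (\<Sum>j\<in>UNIV. norm (C$i$j) * norm (v$i))"
    by (intro order.trans[OF norm_sum] sum_mono) (simp add: norm_mult i mult_left_mono)
  also have "\<dots> \<le> (\<Sum>i\<in>UNIV. \<Sum>j\<in>UNIV. norm (C$i$j)) * norm (v$i)"
    unfolding sum_distrib_right[symmetric]
    by (intro mult_right_mono member_le_sum[where f = "\<lambda>i. \<Sum>j\<in>UNIV. norm (C$i$j)"])
       (auto intro: sum_nonneg)
  finally show ?thesis using \<open>norm (v$i) > 0\<close> by simp
qed

lemma finite_eigenvalues:
  fixes C :: "'a::real_normed_field^'n^'n"
  shows "finite (eigenvalues C)"
proof -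
  define P where "P = det (mat [:0, 1:] - (\<chi> i j. [:C$i$j:]))"
  have poly_P: "poly P l = det (mat l - C)" for l
    unfolding P_def det_def poly_sum poly_prod
    by (intro sum.cong refl) (auto simp: mat_def poly_prod intro!: prod.cong)
  have eigenvalues_P: "eigenvalues C = {l. poly P l = 0}"
    by (auto simp: eigenvalues_iff_singular invertible_det_nz poly_P)
  define b where "b = (\<Sum>i\<in>UNIV. \<Sum>j\<in>UNIV. norm (C$i$j))"
  have "0 \<le> b" by (simp add: b_def sum_nonneg)
  then have "of_real (b + 1) \<notin> eigenvalues C"
    using eigenvalue_norm_le[of "of_real (b + 1)" C, folded b_def] by auto
  then have "P \<noteq> 0" by (auto simp: eigenvalues_P)
  then show ?thesis by (simp add: eigenvalues_P poly_roots_finite)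
qed

lemma singular_shift_le_spectral_radius:
  fixes B :: "real^'n^'n"
  assumes "\<not> invertible (mat t - B)"
  shows "\<bar>t\<bar> \<le> spectral_radius B"
proof -
  define Bc where "Bc = (\<chi> i j. complex_of_real (B$i$j))"
  obtain y where "y \<noteq> 0" and y: "B *v y = t *s y"
    using assms by (auto simp: eigenvalues_iff_singular[symmetric] eigenvalues_def)
  define v where "v = (\<chi> i. complex_of_real (y$i))"
  have "v \<noteq> 0" using \<open>y \<noteq> 0\<close> by (auto simp: v_def vec_eq_iff)
  moreover have "Bc *v v = complex_of_real t *s v"
    using y by (simp add: vec_eq_iff Bc_def v_def matrix_vector_mult_def flip: of_real_mult of_real_sum)
  ultimately have "complex_of_real t \<in> eigenvalues Bc" by (auto simp: eigenvalues_def)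
  then have "cmod (complex_of_real t) \<in> cmod ` eigenvalues Bc" by blast
  moreover have "spectral_radius B = Max (cmod ` eigenvalues Bc)"
    by (simp add: spectral_radius_def Bc_def eigenvalues_def setcompr_eq_image)
  ultimately show ?thesis
    using finite_eigenvalues[of Bc] by simp
qed

subsection \<open>Inverse-nonnegativity of nonsingular M-matrices\<close>

text \<open>The order on \<^typ>\<open>real^'n\<close> is componentwise, but \<open><\<close> on vectors is not componentwise
  strict; strict positivity is therefore written out as \<open>\<forall>i. 0 < u$i\<close>.\<close>

definition semipositive :: "real^'n^'n \<Rightarrow> bool" where
  "semipositive L \<longleftrightarrow> (\<exists>u. (\<forall>i. 0 < u$i) \<and> (\<forall>i. 0 < (L *v u)$i))"

definition monotone_matrix :: "real^'n^'n \<Rightarrow> bool" where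
  "monotone_matrix L \<longleftrightarrow> (\<forall>y. 0 \<le> L *v y \<longrightarrow> 0 \<le> y)"

lemma Z_matrix_shift:
  assumes "\<forall>i j. 0 \<le> B$i$j" shows "Z_matrix (mat t - B)"
  using assms by (simp add: Z_matrix_def mat_def)

lemma Z_matrix_mult_nonneg_component:
  assumes "Z_matrix L" "0 \<le> z" "z$i = 0"
  shows "(L *v z)$i \<le> 0"
proof -
  have "L$i$j * z$j \<le> 0" for j
    using assms by (cases "j = i") (auto simp: Z_matrix_def less_eq_vec_def mult_nonpos_nonneg)
  then show ?thesis by (simp add: matrix_vector_mult_def sum_nonpos)
qed

lemma Z_matrix_pos_if_mult_pos:
  assumes "Z_matrix L" "0 \<le> u" "\<forall>i. 0 < (L *v u)$i"
  shows "0 < u$i"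
proof (rule ccontr)
  assume "\<not> 0 < u$i"
  moreover have "0 \<le> u$i" using assms(2) by (simp add: less_eq_vec_def)
  ultimately have "u$i = 0" by simp
  then show False
    using Z_matrix_mult_nonneg_component[OF assms(1,2)] assms(3) by (metis not_le)
qed

lemma semipositive_imp_monotone_matrix:
  assumes "Z_matrix L" "semipositive L"
  shows "monotone_matrix L"
  unfolding monotone_matrix_def
proof safe
  fix y
  assume Ly: "0 \<le> L *v y"
  obtain u where u: "\<forall>i. 0 < u$i" "\<forall>i. 0 < (L *v u)$i"
    using assms(2) by (auto simp: semipositive_def)
  obtain i where i: "\<And>j. y$i / u$i \<le> y$j / u$j"
    using finite_range_has_min[of "\<lambda>j. y$j / u$j"] by blast
  define c where "c = y$i / u$i"
  have c_le: "c * u$j \<le> y$j" for j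
    using i[of j] u(1) by (simp add: c_def pos_le_divide_eq)
  have "0 \<le> c"
  proof (rule ccontr)
    assume "\<not> 0 \<le> c"
    define z where "z = y - c *\<^sub>R u"
    have "0 \<le> z" "z$i = 0"
      using c_le u(1)[rule_format, of i] by (auto simp: z_def c_def less_eq_vec_def)
    then have "(L *v z)$i \<le> 0"
      by (rule Z_matrix_mult_nonneg_component[OF assms(1)])
    moreover have "(L *v z)$i = (L *v y)$i - c * (L *v u)$i"
      by (simp add: z_def matrix_vector_mult_diff_distrib matrix_vector_mult_scaleR)
    moreover have "c * (L *v u)$i < 0"
      using \<open>\<not> 0 \<le> c\<close> u(2) by (simp add: mult_neg_pos)
    moreover have "0 \<le> (L *v y)$i" using Ly by (simp add: less_eq_vec_def)
    ultimately show False by linarith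
  qed
  then show "0 \<le> y"
    using c_le u(1) by (simp add: less_eq_vec_def) (meson less_imp_le mult_nonneg_nonneg order.trans)
qed

lemma monotone_matrix_imp_invertible:
  assumes "monotone_matrix L" shows "invertible L"
  unfolding invertible_iff_inj
proof (rule injI)
  fix y z assume "L *v y = L *v z"
  then have "L *v (y - z) = 0" "L *v (z - y) = 0"
    by (simp_all add: matrix_vector_mult_diff_distrib)
  then have "0 \<le> y - z" "0 \<le> z - y"
    using assms unfolding monotone_matrix_def by (metis order_refl)+
  then show "y = z" by (auto simp: less_eq_vec_def vec_eq_iff intro: order.antisym)
qed

lemma monotone_matrix_inv_nonneg:
  assumes "monotone_matrix L" "0 \<le> z"
  shows "0 \<le> matrix_inv L *v z"
  using assms matrix_inv_cancel_right[OF monotone_matrix_imp_invertible[OF assms(1)]]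
  by (simp add: monotone_matrix_def)

lemma ex_semipositive_shift:
  fixes B :: "real^'n^'n"
  shows "\<exists>t. semipositive (mat t - B)"
proof -
  define t where "t = 1 + (\<Sum>i\<in>UNIV. \<Sum>j\<in>UNIV. \<bar>B$i$j\<bar>)"
  have "(B *v (\<chi> i. 1))$i < t" for i
  proof -
    have "(B *v (\<chi> i. 1))$i \<le> (\<Sum>j\<in>UNIV. \<bar>B$i$j\<bar>)"
      by (auto simp: matrix_vector_mult_def intro: sum_mono)
    also have "\<dots> \<le> (\<Sum>i\<in>UNIV. \<Sum>j\<in>UNIV. \<bar>B$i$j\<bar>)"
      by (rule member_le_sum[where f = "\<lambda>i. \<Sum>j\<in>UNIV. \<bar>B$i$j\<bar>"]) (auto intro: sum_nonneg)
    finally show ?thesis by (simp add: t_def)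
  qed
  then have "semipositive (mat t - B)"
    unfolding semipositive_def by (intro exI[of _ "\<chi> i. 1"]) (simp add: shift_mult_vector_component)
  then show ?thesis ..
qed

lemma semipositive_shift_mono:
  assumes "semipositive (mat t - B)" "t \<le> t'"
  shows "semipositive (mat t' - B)"
proof -
  obtain u where u: "\<forall>i. 0 < u$i" "\<forall>i. 0 < ((mat t - B) *v u)$i"
    using assms(1) by (auto simp: semipositive_def)
  have "0 < ((mat t' - B) *v u)$i" for i
  proof -
    have "t * u$i \<le> t' * u$i" using assms(2) u(1) by (simp add: mult_right_mono less_imp_le)
    then show ?thesis using u(2)[rule_format, of i] unfolding shift_mult_vector_component by linarith
  qed
  then show ?thesis using u(1) by (auto simp: semipositive_def)
qed

lemma semipositive_shift_open:
  assumes "semipositive (mat t - B)"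
  shows "\<exists>t'<t. semipositive (mat t' - B)"
proof -
  obtain u where u: "\<forall>i. 0 < u$i" "\<forall>i. 0 < ((mat t - B) *v u)$i"
    using assms by (auto simp: semipositive_def)
  obtain \<delta> where "\<delta> > 0" and \<delta>: "\<forall>i. \<delta> * u$i < ((mat t - B) *v u)$i"
    using ex_pos_small_scale[OF u(2)] by blast
  have "0 < ((mat (t - \<delta>) - B) *v u)$i" for i
    using \<delta>[rule_format, of i] unfolding shift_mult_vector_component by (simp add: algebra_simps)
  then show ?thesis
    using u(1) \<open>\<delta> > 0\<close> by (intro exI[of _ "t - \<delta>"]) (auto simp: semipositive_def)
qed

lemma semipositive_shift_at_limit:
  assumes B: "\<forall>i j. 0 \<le> B$i$j"
    and mono: "\<forall>t'>t. monotone_matrix (mat t' - B)"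
    and inv: "invertible (mat t - B)"
  shows "semipositive (mat t - B)"
proof -
  define y where "y = matrix_inv (mat t - B) *v (\<chi> i. 1)"
  have y: "(mat t - B) *v y = (\<chi> i. 1)"
    unfolding y_def by (rule matrix_inv_cancel_right[OF inv])
  obtain \<delta> where "\<delta> > 0" and \<delta>: "\<forall>i. \<delta> * - y$i < 1"
    using ex_pos_small_scale[of "\<chi> i. 1" "- y"] by auto
  have "((mat (t + \<delta>) - B) *v y)$i = 1 + \<delta> * y$i" for i
    using arg_cong[OF y, of "\<lambda>v. v$i"] unfolding shift_mult_vector_component
    by (simp add: algebra_simps)
  moreover have "0 \<le> 1 + \<delta> * y$i" for i
    using \<delta>[rule_format, of i] by (simp add: algebra_simps)
  ultimately have "0 \<le> (mat (t + \<delta>) - B) *v y"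
    by (simp add: less_eq_vec_def)
  then have "0 \<le> y"
    using mono[rule_format, of "t + \<delta>"] \<open>\<delta> > 0\<close> by (simp add: monotone_matrix_def)
  moreover have "\<forall>i. 0 < ((mat t - B) *v y)$i"
    using y by simp
  ultimately have "\<forall>i. 0 < y$i"
    using Z_matrix_pos_if_mult_pos[OF Z_matrix_shift[OF B]] by blast
  then show ?thesis
    using y by (auto simp: semipositive_def)
qed

lemma semipositive_shift_if_invertible_above:
  assumes B: "\<forall>i j. 0 \<le> B$i$j" and inv: "\<forall>t\<ge>s. invertible (mat t - B)"
  shows "semipositive (mat s - B)"
proof (rule ccontr)
  define T where "T = {t. semipositive (mat t - B)}"
  assume "\<not> semipositive (mat s - B)"
  then have s_le: "s \<le> t" if "t \<in> T" for t
    using that semipositive_shift_mono[of t B s] by (force simp: T_def)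
  have "T \<noteq> {}" using ex_semipositive_shift by (auto simp: T_def)
  have "bdd_below T" using s_le by (rule bdd_belowI)
  define t\<^sub>0 where "t\<^sub>0 = Inf T"
  have "s \<le> t\<^sub>0" unfolding t\<^sub>0_def using \<open>T \<noteq> {}\<close> s_le by (rule cInf_greatest)
  have mono: "\<forall>t'>t\<^sub>0. monotone_matrix (mat t' - B)"
  proof (intro allI impI)
    fix t' assume "t\<^sub>0 < t'"
    then obtain t where "t \<in> T" "t < t'"
      unfolding t\<^sub>0_def using cInf_lessD[OF \<open>T \<noteq> {}\<close>] by blast
    then have "semipositive (mat t' - B)"
      using semipositive_shift_mono by (force simp: T_def)
    then show "monotone_matrix (mat t' - B)"
      by (rule semipositive_imp_monotone_matrix[OF Z_matrix_shift[OF B]])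
  qed
  have "semipositive (mat t\<^sub>0 - B)"
    using semipositive_shift_at_limit[OF B mono] inv \<open>s \<le> t\<^sub>0\<close> by blast
  then obtain t where "t < t\<^sub>0" "t \<in> T"
    using semipositive_shift_open by (auto simp: T_def)
  then show False
    using cInf_lower[OF _ \<open>bdd_below T\<close>] by (fastforce simp: t\<^sub>0_def)
qed

lemma nonsingular_M_matrix_semipositive:
  assumes "nonsingular_M_matrix A" shows "semipositive A"
proof -
  obtain s B where B: "\<forall>i j. 0 \<le> B$i$j" and A: "A = mat s - B"
    and rho: "spectral_radius B \<le> s" and inv: "invertible A"
    using assms by (auto simp: nonsingular_M_matrix_def M_matrix_def scaleR_mat_one)
  have "invertible (mat t - B)" if "s \<le> t" for t
  proof (rule ccontr)
    assume singular: "\<not> invertible (mat t - B)"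
    then have "\<bar>t\<bar> \<le> spectral_radius B" by (rule singular_shift_le_spectral_radius)
    then have "t = s" using rho that by linarith
    then show False using singular inv A by simp
  qed
  then show ?thesis
    using semipositive_shift_if_invertible_above[OF B] A by simp
qed

lemma nonsingular_M_matrix_monotone:
  assumes "nonsingular_M_matrix A" shows "monotone_matrix A"
  using assms nonsingular_M_matrix_semipositive semipositive_imp_monotone_matrix
  by (auto simp: nonsingular_M_matrix_def M_matrix_def)

subsection \<open>The Thompson metric\<close>

lemma abs_exp_minus_one_le:
  fixes t :: real
  shows "\<bar>exp t - 1\<bar> \<le> \<bar>t\<bar> * exp \<bar>t\<bar>"
proof (cases "0 \<le> t")
  case True
  have "1 - t \<le> exp (- t)" using exp_ge_add_one_self[of "- t"] by simp
  then have "(1 - t) * exp t \<le> 1" by (simp add: exp_minus field_simps)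
  then show ?thesis using True by (simp add: algebra_simps)
next
  case False
  have "1 - exp t \<le> - t" using exp_ge_add_one_self[of t] by linarith
  also have "\<dots> \<le> - t * exp (- t)" using False by simp
  finally show ?thesis using False by simp
qed

lemma abs_ln_diff_le_iff:
  fixes a b e :: real
  assumes "0 < a" "0 < b"
  shows "\<bar>ln b - ln a\<bar> \<le> e \<longleftrightarrow> exp (- e) * a \<le> b \<and> b \<le> exp e * a"
proof -
  have "exp (- e) * a \<le> b \<longleftrightarrow> ln (exp (- e) * a) \<le> ln b"
    using assms by simp
  also have "\<dots> \<longleftrightarrow> - e \<le> ln b - ln a"
    using assms by (simp add: ln_mult) arith
  finally have lower: "exp (- e) * a \<le> b \<longleftrightarrow> - e \<le> ln b - ln a" .
  have "b \<le> exp e * a \<longleftrightarrow> ln b \<le> ln (exp e * a)"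
    using assms by simp
  also have "\<dots> \<longleftrightarrow> ln b - ln a \<le> e"
    using assms by (simp add: ln_mult) arith
  finally show ?thesis using lower by (auto simp: abs_le_iff)
qed

lemma sup_norm_le_iff: "sup_norm x \<le> c \<longleftrightarrow> (\<forall>i. \<bar>x$i\<bar> \<le> c)"
  by (simp add: sup_norm_def)

lemma abs_component_le_sup_norm: "\<bar>x$i\<bar> \<le> sup_norm x"
  by (simp add: sup_norm_def)

lemma sup_norm_nonneg: "0 \<le> sup_norm x"
  by (rule order.trans[OF abs_ge_zero abs_component_le_sup_norm])

text \<open>Thompson's metric on the positive cone; on vectors with non-positive entries \<^const>\<open>ln\<close>
  produces junk values.\<close>

definition thompson_dist :: "real^'n \<Rightarrow> real^'n \<Rightarrow> real" where
  "thompson_dist v w = Max (range (\<lambda>i. \<bar>ln (w$i) - ln (v$i)\<bar>))"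

lemma thompson_dist_le_iff: "thompson_dist v w \<le> e \<longleftrightarrow> (\<forall>i. \<bar>ln (w$i) - ln (v$i)\<bar> \<le> e)"
  by (simp add: thompson_dist_def)

lemma abs_ln_diff_le_thompson_dist: "\<bar>ln (w$i) - ln (v$i)\<bar> \<le> thompson_dist v w"
  by (simp add: thompson_dist_def)

lemma thompson_dist_nonneg: "0 \<le> thompson_dist v w"
  by (rule order.trans[OF abs_ge_zero abs_ln_diff_le_thompson_dist])

lemma vpow_pos:
  assumes "\<forall>i. 0 < v$i" shows "0 < vpow v p $ i"
  using assms[rule_format, of i] by (simp add: vpow_def)

lemma thompson_dist_vpow_le:
  "thompson_dist (vpow v p) (vpow w p) \<le> \<bar>p\<bar> * thompson_dist v w"
  unfolding thompson_dist_le_iff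
  by (simp add: vpow_def abs_mult mult_left_mono abs_ln_diff_le_thompson_dist flip: right_diff_distrib)

lemma nonneg_preserving_mult_mono:
  fixes G :: "real^'n^'n"
  assumes "\<And>z. 0 \<le> z \<Longrightarrow> 0 \<le> G *v z" "x \<le> y"
  shows "G *v x \<le> G *v y"
  using assms(1)[of "y - x"] assms(2)
  by (simp add: matrix_vector_mult_diff_distrib less_eq_vec_def)

lemma thompson_dist_mult_le:
  fixes G :: "real^'n^'n"
  assumes G: "\<And>z. 0 \<le> z \<Longrightarrow> 0 \<le> G *v z"
    and v: "\<forall>i. 0 < v$i" and w: "\<forall>i. 0 < w$i" and Gv: "\<forall>i. 0 < (G *v v)$i"
  shows "(\<forall>i. 0 < (G *v w)$i) \<and> thompson_dist (G *v v) (G *v w) \<le> thompson_dist v w"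
proof -
  define e where "e = thompson_dist v w"
  have "exp (- e) *\<^sub>R v \<le> w" "w \<le> exp e *\<^sub>R v"
    using abs_ln_diff_le_thompson_dist[of w _ v] abs_ln_diff_le_iff v w
    by (auto simp: less_eq_vec_def e_def)
  then have lower: "exp (- e) *\<^sub>R (G *v v) \<le> G *v w"
    and upper: "G *v w \<le> exp e *\<^sub>R (G *v v)"
    using nonneg_preserving_mult_mono[OF G] unfolding matrix_vector_mult_scaleR[symmetric] by blast+
  have pos: "0 < (G *v w)$i" for i
  proof -
    have "0 < exp (- e) * (G *v v)$i" using Gv by simp
    also have "\<dots> \<le> (G *v w)$i" using lower by (simp add: less_eq_vec_def)
    finally show ?thesis .
  qed
  moreover have "\<bar>ln ((G *v w)$i) - ln ((G *v v)$i)\<bar> \<le> e" for i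
    using lower upper pos[of i] Gv abs_ln_diff_le_iff by (simp add: less_eq_vec_def)
  ultimately show ?thesis by (simp add: thompson_dist_le_iff e_def)
qed

lemma sup_norm_diff_le_thompson_dist:
  assumes v: "\<forall>i. 0 < v$i" and w: "\<forall>i. 0 < w$i" and D: "thompson_dist v w \<le> D"
  shows "sup_norm (w - v) \<le> sup_norm v * exp D * thompson_dist v w"
proof -
  have "\<bar>w$i - v$i\<bar> \<le> sup_norm v * exp D * thompson_dist v w" for i
  proof -
    define t where "t = ln (w$i) - ln (v$i)"
    have vi: "0 < v$i" using v by simp
    have "w$i = v$i * exp t" using vi w[rule_format, of i] by (simp add: t_def exp_diff)
    then have "w$i - v$i = v$i * (exp t - 1)" by (simp add: algebra_simps)
    then have "\<bar>w$i - v$i\<bar> = v$i * \<bar>exp t - 1\<bar>"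
      using vi by (simp add: abs_mult)
    also have "\<dots> \<le> v$i * (\<bar>t\<bar> * exp \<bar>t\<bar>)"
      using vi abs_exp_minus_one_le by (simp add: mult_left_mono)
    also have "\<dots> \<le> sup_norm v * (thompson_dist v w * exp D)"
    proof (intro mult_mono)
      show "v$i \<le> sup_norm v" using abs_component_le_sup_norm[of v i] vi by simp
      show "\<bar>t\<bar> \<le> thompson_dist v w" unfolding t_def by (rule abs_ln_diff_le_thompson_dist)
      then show "exp \<bar>t\<bar> \<le> exp D" using D by simp
    qed (use vi thompson_dist_nonneg sup_norm_nonneg in auto)
    finally show ?thesis by (simp add: ac_simps)
  qed
  then show ?thesis by (simp add: sup_norm_le_iff)
qed

subsection \<open>Convergence of the power iteration\<close>

lemma power_iteration_thompson_dist:
  fixes G :: "real^'n^'n"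
  assumes G: "\<And>z. 0 \<le> z \<Longrightarrow> 0 \<le> G *v z"
    and fixed: "G *v vpow xs p = xs" and xs: "\<forall>i. 0 < xs$i"
    and x1: "\<forall>i. 0 < x 1 $ i"
    and iter: "\<forall>n\<ge>1. x (Suc n) = G *v vpow (x n) p"
    and "1 \<le> n"
  shows "(\<forall>i. 0 < x n $ i) \<and> thompson_dist xs (x n) \<le> \<bar>p\<bar>^(n-1) * thompson_dist xs (x 1)"
  using \<open>1 \<le> n\<close>
proof (induction n rule: nat_induct_at_least)
  case base
  then show ?case using x1 by simp
next
  case (Suc n)
  then have xn: "\<forall>i. 0 < x n $ i"
    and dn: "thompson_dist xs (x n) \<le> \<bar>p\<bar>^(n-1) * thompson_dist xs (x 1)" by auto
  have "\<forall>i. 0 < vpow xs p $ i" "\<forall>i. 0 < vpow (x n) p $ i"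
    using xs xn by (simp_all add: vpow_pos)
  from thompson_dist_mult_le[OF G this] xs
  have "(\<forall>i. 0 < x (Suc n) $ i) \<and>
      thompson_dist xs (x (Suc n)) \<le> thompson_dist (vpow xs p) (vpow (x n) p)"
    using iter Suc.hyps by (simp add: fixed)
  moreover have "thompson_dist (vpow xs p) (vpow (x n) p) \<le> \<bar>p\<bar> * thompson_dist xs (x n)"
    by (rule thompson_dist_vpow_le)
  moreover have "\<bar>p\<bar> * thompson_dist xs (x n) \<le> \<bar>p\<bar>^(Suc n - 1) * thompson_dist xs (x 1)"
    using mult_left_mono[OF dn, of "\<bar>p\<bar>"] Suc.hyps by (cases n) auto
  ultimately show ?case by auto
qed

lemma power_iteration_geometric_bound:
  fixes G :: "real^'n^'n"
  assumes G: "\<And>z. 0 \<le> z \<Longrightarrow> 0 \<le> G *v z"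
    and fixed: "G *v vpow xs p = xs" and xs: "\<forall>i. 0 < xs$i"
    and x1: "\<forall>i. 0 < x 1 $ i"
    and iter: "\<forall>n\<ge>1. x (Suc n) = G *v vpow (x n) p"
    and p: "\<bar>p\<bar> \<le> 1"
  shows "\<exists>K. \<forall>n\<ge>1. sup_norm (x n - xs) \<le> K * \<bar>p\<bar>^(n-1)"
proof -
  define d where "d = thompson_dist xs (x 1)"
  have "0 \<le> d" unfolding d_def by (rule thompson_dist_nonneg)
  have "sup_norm (x n - xs) \<le> (sup_norm xs * exp d * d) * \<bar>p\<bar>^(n-1)" if "1 \<le> n" for n
  proof -
    have xn: "\<forall>i. 0 < x n $ i" and dn: "thompson_dist xs (x n) \<le> \<bar>p\<bar>^(n-1) * d"
      using power_iteration_thompson_dist[OF G fixed xs x1 iter that] by (auto simp: d_def)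
    have "\<bar>p\<bar>^(n-1) * d \<le> d"
      using p \<open>0 \<le> d\<close> by (simp add: mult_left_le_one_le power_le_one)
    then have "sup_norm (x n - xs) \<le> sup_norm xs * exp d * thompson_dist xs (x n)"
      using sup_norm_diff_le_thompson_dist[OF xs xn] dn by simp
    also have "\<dots> \<le> sup_norm xs * exp d * (\<bar>p\<bar>^(n-1) * d)"
      using dn sup_norm_nonneg by (intro mult_left_mono mult_nonneg_nonneg) auto
    finally show ?thesis by (simp add: ac_simps)
  qed
  then show ?thesis by blast
qed

lemma tendsto_if_sup_norm_le_geometric:
  fixes x :: "nat \<Rightarrow> real^'n"
  assumes bound: "\<forall>n\<ge>1. sup_norm (x n - y) \<le> K * q^(n-1)" and q: "0 \<le> q" "q < 1"
  shows "x \<longlonglongrightarrow> y"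
proof (rule vec_tendstoI)
  fix i
  have "(\<lambda>n. K * q^(Suc n - 1)) \<longlonglongrightarrow> 0"
    using q by (simp add: tendsto_mult_right_zero LIMSEQ_power_zero)
  then have lim: "(\<lambda>n. K * q^(n-1)) \<longlonglongrightarrow> 0"
    by (rule LIMSEQ_imp_Suc)
  have "norm (x n $ i - y $ i) \<le> K * q^(n-1)" if "1 \<le> n" for n
    using bound that order.trans[OF abs_component_le_sup_norm[of "x n - y" i]] by auto
  then have "\<forall>\<^sub>F n in sequentially. norm (x n $ i - y $ i) \<le> K * q^(n-1)"
    by (rule eventually_sequentiallyI)
  then have "(\<lambda>n. x n $ i - y $ i) \<longlonglongrightarrow> 0"
    using lim by (rule Lim_null_comparison)
  then show "(\<lambda>n. x n $ i) \<longlonglongrightarrow> y $ i" by (rule LIM_zero_cancel)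
qed

theorem proposition5p1:
  fixes A :: "real^'n^'n" and p :: real and xs :: "real^'n"
    and x :: "nat \<Rightarrow> real^'n" and Cmin Cmax m M :: real
  assumes hA: "nonsingular_M_matrix A"
    and hp: "-1 < p" "p < 1"
    and hxs_pos: "\<forall>i. 0 < xs$i"
    and hxs_sol: "A *v xs = vpow xs p"
    and hCmin: "Cmin = Min (range (\<lambda>i. (matrix_inv A *v ones)$i))"
    and hCmax: "Cmax = Max (range (\<lambda>i. (matrix_inv A *v ones)$i))"
    and hm: "m = (if 0 \<le> p then Cmin powr (1/(1-p))
                  else (Cmin * Cmax powr p) powr (1/(1-p^2)))"
    and hM: "M = (if 0 \<le> p then Cmax powr (1/(1-p))
                  else (Cmin powr p * Cmax) powr (1/(1-p^2)))"
    and hx1: "\<forall>i. m \<le> x 1 $ i \<and> x 1 $ i \<le> M"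
    and hrec: "\<forall>n\<ge>1. x (Suc n) = matrix_inv A *v vpow (x n) p"
  shows "(x \<longlongrightarrow> xs) sequentially \<and>
         (\<exists>K. \<forall>n\<ge>1. sup_norm (x n - xs) \<le> K * \<bar>p\<bar>^(n-1))"
proof -
  have mono: "monotone_matrix A" by (rule nonsingular_M_matrix_monotone[OF hA])
  have inv: "invertible A" by (rule monotone_matrix_imp_invertible[OF mono])
  have G_nonneg: "0 \<le> matrix_inv A *v z" if "0 \<le> z" for z
    using mono that by (rule monotone_matrix_inv_nonneg)
  have fixed: "matrix_inv A *v vpow xs p = xs"
    unfolding hxs_sol[symmetric] by (rule matrix_inv_cancel_left[OF inv])
  have Z: "Z_matrix A" using hA by (simp add: nonsingular_M_matrix_def M_matrix_def)
  have "0 \<le> ones" by (simp add: ones_def less_eq_vec_def)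
  then have "0 < (matrix_inv A *v ones)$i" for i
    using Z_matrix_pos_if_mult_pos[OF Z G_nonneg, of ones i]
    by (simp add: matrix_inv_cancel_right[OF inv] ones_def)
  then have "0 < Cmin" "0 < Cmax"
    unfolding hCmin hCmax by (auto simp: Max_gr_iff)
  then have "0 < m" by (simp add: hm)
  then have x1: "\<forall>i. 0 < x 1 $ i" using hx1 by (meson less_le_trans)
  obtain K where bound: "\<forall>n\<ge>1. sup_norm (x n - xs) \<le> K * \<bar>p\<bar>^(n-1)"
    using power_iteration_geometric_bound[OF G_nonneg fixed hxs_pos x1 hrec] hp by fastforce
  then have "x \<longlonglongrightarrow> xs"
    by (rule tendsto_if_sup_norm_le_geometric) (use hp in auto)
  with bound show ?thesis by blast
qed

end
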